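(* Let $k\ge1$ be an integer, $\rho\ne0$ real, $0\le q<1$, and $z$ a complex number. Then, as formal power series in $t$, $$(1+\rho t)^{z/\rho}\,{\rm Lif}_{k,q}\!\left(-\frac{\ln(1+\rho t)}{\rho}\right)=\sum_{n=0}^\infty \widehat c_{n,\rho,q}^{(k)}(z)\frac{t^n}{n!},$$ where $(1+\rho t)^{z/\rho}=\exp\!\big(\tfrac{z}{\rho}\ln(1+\rho t)\big)$.
   Context: For real $0\le q<1$ (with $0^0=1$), $[x]_q=\frac{1-q^x}{1-q}$. The $q$-polyfactorial function is ${\rm Lif}_{k,q}(w)=\sum_{n=0}^\infty\frac{w^n}{n!\,[n+1]_q^k}$. Jackson's $q$-integral: $\int_0^1 f(x)\,d_qx=(1-q)\sum_{j\ge0} f(q^j)q^j$; multiple integrals are iterated. $(x)_n=x(x-1)\cdots(x-n+1)$, $(x)_0=1$. The $q$-poly-Cauchy polynomials of the second kind with parameter $\rho$ are $\widehat c_{n,\rho,q}^{(k)}(z)=\rho^n\int_0^1\cdots\int_0^1\left(\frac{-x_1\cdots x_k+z}{\rho}\right)_n d_qx_1\cdots d_qx_k$ ($k$-fold). *)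

theory Defs
  imports "HOL-Analysis.Analysis" "HOL-Computational_Algebra.Formal_Power_Series"
begin

definition qnum :: "real \<Rightarrow> nat \<Rightarrow> real" where
  "qnum q x = (1 - q ^ x) / (1 - q)"

definition falling :: "complex \<Rightarrow> nat \<Rightarrow> complex" where
  "falling x n = (\<Prod>i<n. x - of_nat i)"

definition jackson_int :: "real \<Rightarrow> (real \<Rightarrow> complex) \<Rightarrow> complex" where
  "jackson_int q f = of_real (1 - q) * (\<Sum>j. f (q ^ j) * of_real (q ^ j))"

text \<open>k-fold iterated Jackson integral; the integrand takes the list [x_1,...,x_k]
  (innermost integration variable x_1 is the head of the list, iterated as written
   d_q x_1 ... d_q x_k).\<close>
fun jackson_multi :: "real \<Rightarrow> nat \<Rightarrow> (real list \<Rightarrow> complex) \<Rightarrow> complex" where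
  "jackson_multi q 0 F = F []"
| "jackson_multi q (Suc k) F = jackson_int q (\<lambda>x. jackson_multi q k (\<lambda>xs. F (xs @ [x])))"

definition qpoly_cauchy2 :: "nat \<Rightarrow> real \<Rightarrow> real \<Rightarrow> nat \<Rightarrow> complex \<Rightarrow> complex" where
  "qpoly_cauchy2 k \<rho> q n z =
     of_real (\<rho> ^ n) *
     jackson_multi q k (\<lambda>xs. falling ((- of_real (prod_list xs) + z) / of_real \<rho>) n)"

definition Lif_fps :: "nat \<Rightarrow> real \<Rightarrow> complex fps" where
  "Lif_fps k q = Abs_fps (\<lambda>n. 1 / (of_nat (fact n) * of_real (qnum q (Suc n) ^ k)))"

definition ln1p_fps :: "real \<Rightarrow> complex fps" where
  "ln1p_fps \<rho> = fps_ln 1 oo (fps_const (of_real \<rho>) * fps_X)"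

end

theory Submission
  imports Defs
begin

text \<open>By the binomial series, \<open>(1 + \<rho>t)^((z - x)/\<rho>)\<close> has \<open>t^n/n!\<close>-coefficient
  \<open>\<rho>^n ((z - x)/\<rho>)_n\<close>. Writing it as \<open>(1 + \<rho>t)^(z/\<rho>) exp (x B(t))\<close> with
  \<open>B(t) = -ln(1 + \<rho>t)/\<rho>\<close> shows that this coefficient is a polynomial in \<open>x\<close> whose
  \<open>x^m\<close>-coefficient comes from \<open>(1 + \<rho>t)^(z/\<rho>) B(t)^m/m!\<close>. Substituting
  \<open>x = x_1 \<dots> x_k\<close>, the k-fold Jackson integral sends \<open>x^m\<close> to \<open>1/[m+1]_q^k\<close>,
  which turns \<open>exp (x B)\<close> into \<open>Lif_{k,q}(B)\<close>.\<close>

lemma jackson_int_monomial_sums: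
  assumes "0 \<le> q" "q < 1"
  shows "(\<lambda>j. (of_real (q ^ j) :: complex) ^ m * of_real (q ^ j))
           sums (1 / (1 - of_real (q ^ Suc m)))"
proof -
  have "q ^ Suc m < 1"
    using assms by (simp add: power_less_one_iff del: power_Suc)
  then have "norm (of_real (q ^ Suc m) :: complex) < 1"
    using assms by (simp only: norm_of_real abs_of_nonneg zero_le_power)
  moreover have "(of_real (q ^ j) :: complex) ^ m * of_real (q ^ j) = of_real (q ^ Suc m) ^ j" for j
    by (metis mult.commute of_real_power power_Suc2 power_mult)
  ultimately show ?thesis
    using geometric_sums by simp
qed

lemma jackson_int_polynomial:
  assumes "0 \<le> q" "q < 1" "finite S"
  shows "jackson_int q (\<lambda>x. \<Sum>m\<in>S. d m * of_real x ^ m)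
       = (\<Sum>m\<in>S. d m / of_real (qnum q (Suc m)))"
proof -
  have "(\<lambda>j. (\<Sum>m\<in>S. d m * of_real (q ^ j) ^ m) * of_real (q ^ j))
          sums (\<Sum>m\<in>S. d m * (1 / (1 - of_real (q ^ Suc m))))"
    unfolding sum_distrib_right mult.assoc
    by (intro sums_sum sums_mult jackson_int_monomial_sums assms)
  moreover have "of_real (1 - q) * (d m * (1 / (1 - of_real (q ^ Suc m))))
                   = d m / of_real (qnum q (Suc m))" for m
  proof -
    have "q ^ Suc m < 1"
      using assms by (simp add: power_less_one_iff del: power_Suc)
    then have "(1 - of_real (q ^ Suc m) :: complex) \<noteq> 0"
      by (metis less_irrefl of_real_1 of_real_eq_iff right_minus_eq)
    then show ?thesis
      using assms by (simp add: qnum_def field_simps)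
  qed
  ultimately show ?thesis
    by (simp add: jackson_int_def sums_iff sum_distrib_left)
qed

lemma jackson_multi_polynomial:
  assumes "0 \<le> q" "q < 1" "finite S"
  shows "jackson_multi q k (\<lambda>xs. \<Sum>m\<in>S. d m * of_real (prod_list xs) ^ m)
       = (\<Sum>m\<in>S. d m / of_real (qnum q (Suc m)) ^ k)"
proof (induction k arbitrary: d)
  case 0
  then show ?case by simp
next
  case (Suc k)
  have "(\<lambda>x. jackson_multi q k (\<lambda>xs. \<Sum>m\<in>S. d m * of_real (prod_list (xs @ [x])) ^ m))
          = (\<lambda>x. \<Sum>m\<in>S. d m / of_real (qnum q (Suc m)) ^ k * of_real x ^ m)"
  proof
    fix x
    show "jackson_multi q k (\<lambda>xs. \<Sum>m\<in>S. d m * of_real (prod_list (xs @ [x])) ^ m)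
            = (\<Sum>m\<in>S. d m / of_real (qnum q (Suc m)) ^ k * of_real x ^ m)"
      using Suc.IH[of "\<lambda>m. d m * of_real x ^ m"] by (simp add: power_mult_distrib mult_ac)
  qed
  then show ?case
    by (simp only: jackson_multi.simps jackson_int_polynomial[OF assms]
        divide_divide_eq_left power_Suc2)
qed

lemma fps_exp_compose_const_mult:
  fixes G :: "'a::field_char_0 fps"
  assumes "fps_nth G 0 = 0"
  shows "fps_exp 1 oo (fps_const c * G) = fps_exp c oo G"
proof -
  have "fps_exp c oo G = (fps_exp 1 oo (fps_const c * fps_X)) oo G"
    by simp
  also have "\<dots> = fps_exp 1 oo ((fps_const c * fps_X) oo G)"
    using assms by (simp add: fps_compose_assoc)
  also have "(fps_const c * fps_X) oo G = fps_const c * G"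
    using assms by (simp flip: fps_const_mult_apply_left)
  finally show ?thesis by simp
qed

lemma fps_exp_compose_ln: "fps_exp c oo fps_ln 1 = fps_binomial (c :: 'a::field_char_0)"
proof -
  let ?E = "fps_exp c oo fps_ln 1"
  have "fps_deriv ?E = ((fps_const c * fps_exp c) oo fps_ln 1) * (fps_const 1 * inverse (1 + fps_X))"
    by (simp add: fps_compose_deriv fps_ln_deriv)
  also have "\<dots> = fps_const c * ?E * inverse (1 + fps_X)"
    by (simp flip: fps_const_mult_apply_left)
  also have "\<dots> = fps_const c * ?E / (1 + fps_X)"
    by (rule fps_divide_unit[symmetric]) simp
  finally have "fps_deriv ?E = fps_const c * ?E / (1 + fps_X)" .
  moreover have "fps_nth ?E 0 = 1"
    by (simp add: fps_compose_nth)
  ultimately show ?thesis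
    using fps_binomial_ODE_unique' by blast
qed

lemma ln1p_fps_nth_0 [simp]: "fps_nth (ln1p_fps \<rho>) 0 = 0"
  by (simp add: ln1p_fps_def)

lemma fps_exp_compose_ln1p_nth:
  "fps_nth (fps_exp c oo ln1p_fps \<rho>) n = of_real \<rho> ^ n * (c gchoose n)"
proof -
  have "fps_exp c oo ln1p_fps \<rho> = (fps_exp c oo fps_ln 1) oo (fps_const (of_real \<rho>) * fps_X)"
    unfolding ln1p_fps_def by (simp add: fps_compose_assoc)
  then show ?thesis by (simp add: fps_exp_compose_ln)
qed

lemma fps_mult_compose_nth:
  fixes a f B :: "'a::comm_ring_1 fps"
  assumes "fps_nth B 0 = 0"
  shows "fps_nth (a * (f oo B)) n = (\<Sum>m=0..n. fps_nth f m * fps_nth (a * B ^ m) n)"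
proof -
  have "fps_nth (f oo B) j = (\<Sum>m=0..n. fps_nth f m * fps_nth (B ^ m) j)" if "j \<le> n" for j
    unfolding fps_compose_nth
    using that startsby_zero_power_prefix[OF assms] by (intro sum.mono_neutral_left) auto
  then have "fps_nth (a * (f oo B)) n
      = (\<Sum>i=0..n. fps_nth a i * (\<Sum>m=0..n. fps_nth f m * fps_nth (B ^ m) (n - i)))"
    by (simp add: fps_mult_nth)
  also have "\<dots> = (\<Sum>i=0..n. \<Sum>m=0..n. fps_nth f m * (fps_nth a i * fps_nth (B ^ m) (n - i)))"
    by (simp add: sum_distrib_left mult.left_commute)
  also have "\<dots> = (\<Sum>m=0..n. \<Sum>i=0..n. fps_nth f m * (fps_nth a i * fps_nth (B ^ m) (n - i)))"
    by (rule sum.swap)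
  also have "\<dots> = (\<Sum>m=0..n. fps_nth f m * fps_nth (a * B ^ m) n)"
    by (simp only: fps_mult_nth sum_distrib_left)
  finally show ?thesis .
qed

lemma fps_exp_compose_diff_split:
  fixes L :: "'a::field_char_0 fps"
  assumes "fps_nth L 0 = 0"
  shows "fps_exp ((z - x) / r) oo L
           = (fps_exp (z / r) oo L) * (fps_exp x oo (fps_const (- 1 / r) * L))"
proof -
  have "fps_exp ((z - x) / r) = fps_exp (z / r) * fps_exp (- x / r)"
    by (simp add: diff_divide_distrib flip: fps_exp_add_mult)
  then have "fps_exp ((z - x) / r) oo L = (fps_exp (z / r) oo L) * (fps_exp (- x / r) oo L)"
    by (simp only: fps_compose_mult_distrib[OF assms])
  also have "fps_exp (- x / r) oo L = fps_exp 1 oo (fps_const (- x / r) * L)"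
    using assms by (rule fps_exp_compose_const_mult[symmetric])
  also have "fps_const (- x / r) * L = fps_const x * (fps_const (- 1 / r) * L)"
    by (simp add: mult.assoc[symmetric] fps_const_mult)
  also have "fps_exp 1 oo \<dots> = fps_exp x oo (fps_const (- 1 / r) * L)"
    using assms by (simp add: fps_exp_compose_const_mult)
  finally show ?thesis .
qed

lemma falling_eq_fact_gchoose: "falling w n = fact n * (w gchoose n)"
  by (simp add: falling_def gbinomial_mult_fact lessThan_atLeast0)

text \<open>The coefficient of \<open>t^n x^m\<close> in
  \<open>(1 + \<rho>t)^((z - x)/\<rho>) = (1 + \<rho>t)^(z/\<rho>) exp (x B(t))\<close>, where \<open>B(t) = -ln(1 + \<rho>t)/\<rho>\<close>.\<close>
definition cauchy2_coeff :: "real \<Rightarrow> complex \<Rightarrow> nat \<Rightarrow> nat \<Rightarrow> complex" where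
  "cauchy2_coeff \<rho> z n m =
     fps_nth ((fps_exp (z / of_real \<rho>) oo ln1p_fps \<rho>)
              * (fps_const (- 1 / of_real \<rho>) * ln1p_fps \<rho>) ^ m) n / fact m"

lemma falling_ln1p_generating:
  "of_real \<rho> ^ n * falling ((z - x) / of_real \<rho>) n / fact n
     = (\<Sum>m=0..n. cauchy2_coeff \<rho> z n m * x ^ m)"
proof -
  let ?L = "ln1p_fps \<rho>"
  have "of_real \<rho> ^ n * falling ((z - x) / of_real \<rho>) n / fact n
      = fps_nth (fps_exp ((z - x) / of_real \<rho>) oo ?L) n"
    by (simp add: falling_eq_fact_gchoose fps_exp_compose_ln1p_nth)
  also have "\<dots> = fps_nth ((fps_exp (z / of_real \<rho>) oo ?L)
                     * (fps_exp x oo (fps_const (- 1 / of_real \<rho>) * ?L))) n"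
    by (simp only: fps_exp_compose_diff_split ln1p_fps_nth_0)
  also have "\<dots> = (\<Sum>m=0..n. fps_nth (fps_exp x) m * fps_nth ((fps_exp (z / of_real \<rho>) oo ?L)
                              * (fps_const (- 1 / of_real \<rho>) * ?L) ^ m) n)"
    by (rule fps_mult_compose_nth) simp
  finally show ?thesis
    by (simp add: cauchy2_coeff_def mult.commute)
qed

lemma qpoly_cauchy2_div_fact:
  assumes "\<rho> \<noteq> 0" and "0 \<le> q" and "q < 1"
  shows "qpoly_cauchy2 k \<rho> q n z / fact n
           = (\<Sum>m=0..n. cauchy2_coeff \<rho> z n m / of_real (qnum q (Suc m)) ^ k)"
proof -
  define c where "c m = fact n / of_real \<rho> ^ n * cauchy2_coeff \<rho> z n m" for m
  have "falling ((- of_real p + z) / of_real \<rho>) n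
          = fact n / of_real \<rho> ^ n * (\<Sum>m=0..n. cauchy2_coeff \<rho> z n m * of_real p ^ m)" for p
    using falling_ln1p_generating[of \<rho> n z "of_real p"] assms(1) by (simp add: field_simps)
  then have falling_expansion:
    "falling ((- of_real p + z) / of_real \<rho>) n = (\<Sum>m=0..n. c m * of_real p ^ m)" for p
    by (simp add: c_def sum_distrib_left mult.assoc)
  have "qpoly_cauchy2 k \<rho> q n z
      = of_real (\<rho> ^ n) * jackson_multi q k (\<lambda>xs. \<Sum>m=0..n. c m * of_real (prod_list xs) ^ m)"
    by (simp only: qpoly_cauchy2_def falling_expansion)
  also have "\<dots> = of_real (\<rho> ^ n) * (\<Sum>m=0..n. c m / of_real (qnum q (Suc m)) ^ k)"
    using assms(2,3) by (simp only: jackson_multi_polynomial finite_atLeastAtMost)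
  also have "\<dots> = fact n * (\<Sum>m=0..n. cauchy2_coeff \<rho> z n m / of_real (qnum q (Suc m)) ^ k)"
    using assms(1) by (simp add: c_def sum_distrib_left)
  finally show ?thesis
    by simp
qed

theorem theorem5:
  fixes k :: nat and \<rho> q :: real and z :: complex
  assumes "k \<ge> 1" and "\<rho> \<noteq> 0" and "0 \<le> q" and "q < 1"
  shows "(fps_exp 1 oo (fps_const (z / of_real \<rho>) * ln1p_fps \<rho>))
           * (Lif_fps k q oo (fps_const (- 1 / of_real \<rho>) * ln1p_fps \<rho>))
         = Abs_fps (\<lambda>n. qpoly_cauchy2 k \<rho> q n z / of_nat (fact n))"
proof (rule fps_ext)
  fix n
  have "fps_exp 1 oo (fps_const (z / of_real \<rho>) * ln1p_fps \<rho>) = fps_exp (z / of_real \<rho>) oo ln1p_fps \<rho>"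
    by (simp add: fps_exp_compose_const_mult)
  then have "fps_nth ((fps_exp 1 oo (fps_const (z / of_real \<rho>) * ln1p_fps \<rho>))
                 * (Lif_fps k q oo (fps_const (- 1 / of_real \<rho>) * ln1p_fps \<rho>))) n
             = (\<Sum>m=0..n. cauchy2_coeff \<rho> z n m / of_real (qnum q (Suc m)) ^ k)"
    by (simp add: fps_mult_compose_nth cauchy2_coeff_def Lif_fps_def)
  then show "fps_nth ((fps_exp 1 oo (fps_const (z / of_real \<rho>) * ln1p_fps \<rho>))
                 * (Lif_fps k q oo (fps_const (- 1 / of_real \<rho>) * ln1p_fps \<rho>))) n
             = fps_nth (Abs_fps (\<lambda>n. qpoly_cauchy2 k \<rho> q n z / of_nat (fact n))) n"
    using qpoly_cauchy2_div_fact[OF assms(2-4)] by simp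
qed

end
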